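(* For all positive integers $n,k$, $$WS(n+k) \geq S(k)\left(WS(n) + \left\lceil \frac{WS(n)}{2}\right\rceil + 1\right) + WS(n).$$
   Context: A set $A \subseteq \mathbb{N}$ is sum-free if for all $(a,b)\in A^2$ (allowing $a=b$), $a+b \notin A$. A set $B\subseteq\mathbb{N}$ is weakly sum-free if for all $(a,b)\in B^2$ with $a\neq b$, $a+b\notin B$. $S(n)$ (the Schur number) is the largest $p$ such that $\{1,\dots,p\}$ can be partitioned into $n$ sum-free subsets; $WS(n)$ (the weak Schur number) is the largest $p$ such that $\{1,\dots,p\}$ can be partitioned into $n$ weakly sum-free subsets. *)

theory Defs
  imports Complex_Main
begin

definition sum_free :: "nat set \<Rightarrow> bool" where
  "sum_free A \<longleftrightarrow> (\<forall>a\<in>A. \<forall>b\<in>A. a + b \<notin> A)"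

definition weakly_sum_free :: "nat set \<Rightarrow> bool" where
  "weakly_sum_free B \<longleftrightarrow> (\<forall>a\<in>B. \<forall>b\<in>B. a \<noteq> b \<longrightarrow> a + b \<notin> B)"

text \<open>{1..p} can be partitioned into n sets with property P
  (parts indexed by {0..<n}; some parts may be empty).\<close>
definition partitionable :: "(nat set \<Rightarrow> bool) \<Rightarrow> nat \<Rightarrow> nat \<Rightarrow> bool" where
  "partitionable P n p \<longleftrightarrow>
     (\<exists>A :: nat \<Rightarrow> nat set.
        (\<Union>i<n. A i) = {1..p} \<and>
        (\<forall>i<n. \<forall>j<n. i \<noteq> j \<longrightarrow> A i \<inter> A j = {}) \<and>
        (\<forall>i<n. P (A i)))"

definition schur :: "nat \<Rightarrow> nat" where
  "schur n = (GREATEST p. partitionable sum_free n p)"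

definition weak_schur :: "nat \<Rightarrow> nat" where
  "weak_schur n = (GREATEST p. partitionable weakly_sum_free n p)"

end

theory Submission
  imports Defs "HOL-Library.Ramsey"
begin

(* Let m = WS(n), c = \<lceil>m/2\<rceil>, L = m + c + 1 and s = S(k), and write x \<in> {1..sL + m} as
   x = qL + r with r < L.  If r \<in> {1..m} and either q = 0 or r > m - c, then x is a copy of r
   and gets the colour of r in a weakly sum-free n-colouring of {1..m}.  Every other x gets the
   colour of its label q + [r > m] \<in> {1..s} in a sum-free k-colouring of {1..s}.  The value of c
   makes the copy classes weakly sum-free: two copies of the same residue come from different
   blocks, so one lies above m - c and the sum of the residues exceeds m, while a carry leaves a
   residue below m - c outside the first block.  On the other elements the label is additive, so
   their classes inherit sum-freeness.  WS(n) is finite by Ramsey's theorem, so the GREATEST in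
   its definition is attained. *)

lemma partitionable_iff_colouring:
  "partitionable P n p \<longleftrightarrow>
     (\<exists>f. (\<forall>x\<in>{1..p}. f x < n) \<and> (\<forall>i<n. P {x\<in>{1..p}. f x = i}))"
proof
  assume "partitionable P n p"
  then obtain A where cover: "(\<Union>i<n. A i) = {1..p}"
    and disjoint: "\<forall>i<n. \<forall>j<n. i \<noteq> j \<longrightarrow> A i \<inter> A j = {}"
    and parts: "\<forall>i<n. P (A i)"
    unfolding partitionable_def by blast
  define f where "f x = (SOME i. i < n \<and> x \<in> A i)" for x
  have f: "f x < n \<and> x \<in> A (f x)" if "x \<in> {1..p}" for x
  proof -
    from that cover obtain i where "i < n \<and> x \<in> A i"
      by blast
    then show ?thesis
      unfolding f_def by (rule someI)
  qed
  have "{x\<in>{1..p}. f x = i} = A i" if "i < n" for i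
  proof
    show "{x\<in>{1..p}. f x = i} \<subseteq> A i"
      using f by auto
    show "A i \<subseteq> {x\<in>{1..p}. f x = i}"
    proof
      fix x
      assume "x \<in> A i"
      with that cover have x: "x \<in> {1..p}"
        by blast
      with f have "f x = i"
        using disjoint that \<open>x \<in> A i\<close> by blast
      with x show "x \<in> {x\<in>{1..p}. f x = i}"
        by simp
    qed
  qed
  then show "\<exists>f. (\<forall>x\<in>{1..p}. f x < n) \<and> (\<forall>i<n. P {x\<in>{1..p}. f x = i})"
    using f parts by (intro exI[of _ f]) simp
next
  assume "\<exists>f. (\<forall>x\<in>{1..p}. f x < n) \<and> (\<forall>i<n. P {x\<in>{1..p}. f x = i})"
  then obtain f where "\<forall>x\<in>{1..p}. f x < n" "\<forall>i<n. P {x\<in>{1..p}. f x = i}"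
    by blast
  then show "partitionable P n p"
    unfolding partitionable_def by (intro exI[of _ "\<lambda>i. {x\<in>{1..p}. f x = i}"]) auto
qed

lemma not_weakly_sum_free_differences:
  assumes "u < x" "x < y" "y < z"
    and diffs: "\<And>a b. a \<in> {u, x, y, z} \<Longrightarrow> b \<in> {u, x, y, z} \<Longrightarrow> a < b \<Longrightarrow> b - a \<in> B"
  shows "\<not> weakly_sum_free B"
proof
  assume B: "weakly_sum_free B"
  have in_B: "x - u \<in> B" "y - x \<in> B" "y - u \<in> B" "z - x \<in> B" "z - u \<in> B"
    using assms(1-3) by (auto intro!: diffs)
  show False
  proof (cases "x - u = y - x")
    case False
    with B in_B have "(x - u) + (y - x) \<notin> B"
      unfolding weakly_sum_free_def by blast
    moreover have "(x - u) + (y - x) = y - u"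
      using assms(1,2) by simp
    ultimately show False
      using in_B by simp
  next
    case True
    with assms have "x - u \<noteq> z - x"
      by simp
    with B in_B have "(x - u) + (z - x) \<notin> B"
      unfolding weakly_sum_free_def by blast
    moreover have "(x - u) + (z - x) = z - u"
      using assms(1-3) by simp
    ultimately show False
      using in_B by simp
  qed
qed

lemma partitionable_bounded:
  assumes "\<And>A. P A \<Longrightarrow> weakly_sum_free A"
  obtains N where "\<And>p. partitionable P n p \<Longrightarrow> p < N"
proof -
  obtain N :: nat where N: "partn_lst {..<N} (replicate n 4) 2"
    using ramsey_full by blast
  have "p < N" if part: "partitionable P n p" for p
  proof (rule ccontr)
    assume "\<not> p < N"
    obtain f where f_range: "\<forall>x\<in>{1..p}. f x < n"
      and f_classes: "\<forall>i<n. weakly_sum_free {x\<in>{1..p}. f x = i}"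
      using part assms unfolding partitionable_iff_colouring by blast
    have diff_range: "b - a \<in> {1..p}" if "a < b" "b < N" for a b
      using that \<open>\<not> p < N\<close> by auto
    define g where "g e = f (Max e - Min e)" for e :: "nat set"
    have "g \<in> nsets {..<N} 2 \<rightarrow> {..<n}"
      using f_range diff_range unfolding g_def ordered_nsets_2_eq by auto
    then obtain i H where i: "i < n" and H: "H \<in> nsets {..<N} 4"
      and mono: "g ` nsets H 2 \<subseteq> {i}"
      using partn_lstE[OF N] by (metis length_replicate nth_replicate)
    from H obtain u x y z where H_eq: "H = {u, x, y, z}" "u < x" "x < y" "y < z" "z < N"
      unfolding ordered_nsets_4_eq by auto
    have "b - a \<in> {x\<in>{1..p}. f x = i}" if "a \<in> H" "b \<in> H" "a < b" for a b
    proof -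
      have "{a, b} \<in> nsets H 2"
        using that by (auto simp: nsets_def card_2_iff)
      then have "g {a, b} = i"
        using mono by blast
      moreover have "b < N"
        using that H_eq by auto
      ultimately show ?thesis
        using that diff_range unfolding g_def by (simp add: max_def min_def)
    qed
    then show False
      using not_weakly_sum_free_differences[OF H_eq(2-4)] f_classes i H_eq(1) by blast
  qed
  then show thesis
    using that by blast
qed

lemma partitionable_Greatest:
  assumes empty: "P {}" and weak: "\<And>A. P A \<Longrightarrow> weakly_sum_free A"
  shows "partitionable P n (GREATEST p. partitionable P n p)"
    and "partitionable P n p \<Longrightarrow> p \<le> (GREATEST p. partitionable P n p)"
proof -
  obtain N where "\<And>p. partitionable P n p \<Longrightarrow> p < N"
    using partitionable_bounded[of P n] weak by blast
  then have bound: "\<And>p. partitionable P n p \<Longrightarrow> p \<le> N"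
    by (simp add: less_imp_le)
  have "partitionable P n 0"
    using empty unfolding partitionable_def by (intro exI[of _ "\<lambda>_. {}"]) simp
  then show "partitionable P n (GREATEST p. partitionable P n p)"
    by (rule GreatestI_nat[OF _ bound])
  show "partitionable P n p \<Longrightarrow> p \<le> (GREATEST p. partitionable P n p)"
    by (rule Greatest_le_nat[OF _ bound])
qed

lemma partitionable_weak_schur: "partitionable weakly_sum_free n (weak_schur n)"
  unfolding weak_schur_def by (rule partitionable_Greatest(1)) (simp_all add: weakly_sum_free_def)

lemma le_weak_schur: "partitionable weakly_sum_free n p \<Longrightarrow> p \<le> weak_schur n"
  unfolding weak_schur_def by (rule partitionable_Greatest(2)) (simp_all add: weakly_sum_free_def)

lemma partitionable_schur: "partitionable sum_free n (schur n)"
  unfolding schur_def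
  by (rule partitionable_Greatest(1)) (simp_all add: sum_free_def weakly_sum_free_def)

lemma add_div_mod_cases [consumes 1, case_names no_carry carry]:
  fixes x y L :: nat
  assumes "0 < L"
  obtains (no_carry) "x mod L + y mod L < L" "(x + y) mod L = x mod L + y mod L"
      "(x + y) div L = x div L + y div L"
    | (carry) "L \<le> x mod L + y mod L" "(x + y) mod L = x mod L + y mod L - L"
      "(x + y) div L = x div L + y div L + 1"
proof -
  have div_eq: "(x + y) div L = x div L + y div L + (x mod L + y mod L) div L"
    by (rule div_add1_eq)
  have mod_eq: "(x + y) mod L = (x mod L + y mod L) mod L"
    by (rule mod_add_eq[symmetric])
  show thesis
  proof (cases "x mod L + y mod L < L")
    case True
    with div_eq mod_eq show thesis by (intro no_carry) simp_all
  next
    case False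
    have "x mod L + y mod L - L < L"
      using mod_less_divisor[OF assms, of x] mod_less_divisor[OF assms, of y] by linarith
    with False have "(x mod L + y mod L) div L = 1"
      and "(x mod L + y mod L) mod L = x mod L + y mod L - L"
      using assms by (simp_all add: le_div_geq le_mod_geq)
    with div_eq mod_eq False show thesis by (intro carry) simp_all
  qed
qed

locale residue_split =
  fixes m c L :: nat
  assumes L_eq: "L = m + c + 1" and c_lower: "m \<le> 2 * c" and c_upper: "2 * c \<le> m + 1"
begin

definition in_copy :: "nat \<Rightarrow> bool" where
  "in_copy x \<longleftrightarrow> x mod L \<in> {1..m} \<and> (x div L = 0 \<or> m - c < x mod L)"

definition label :: "nat \<Rightarrow> nat" where
  "label x = x div L + (if m < x mod L then 1 else 0)"

lemma L_pos: "0 < L"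
  by (simp add: L_eq)

lemma not_in_copy_iff:
  assumes "0 < x"
  shows "\<not> in_copy x \<longleftrightarrow> m < x mod L \<or> (0 < x div L \<and> x mod L \<le> m - c)"
proof -
  have "x div L = 0 \<Longrightarrow> x mod L \<noteq> 0"
    using assms div_mult_mod_eq[of x L] by auto
  then show ?thesis
    unfolding in_copy_def by (cases "x div L = 0") auto
qed

lemma in_copy_add:
  assumes x: "in_copy x" and y: "in_copy y" and xy: "in_copy (x + y)" and "x \<noteq> y"
  shows "(x + y) mod L = x mod L + y mod L" and "x mod L \<noteq> y mod L"
proof -
  have "(x + y) mod L = x mod L + y mod L \<and> x mod L \<noteq> y mod L"
    using L_pos
  proof (cases rule: add_div_mod_cases[where x = x and y = y])
    case no_carry
    have "x mod L \<noteq> y mod L"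
    proof
      assume same: "x mod L = y mod L"
      then have "x div L \<noteq> y div L"
        using \<open>x \<noteq> y\<close> div_mult_mod_eq[of x L] div_mult_mod_eq[of y L] by metis
      with x y same have "m - c < x mod L"
        unfolding in_copy_def by auto
      with no_carry same c_upper have "m < (x + y) mod L"
        by linarith
      with xy show False
        unfolding in_copy_def by simp
    qed
    with no_carry show ?thesis
      by simp
  next
    case carry
    with x y L_eq have "(x + y) mod L \<le> m - c"
      unfolding in_copy_def by auto
    with carry xy show ?thesis
      unfolding in_copy_def by auto
  qed
  then show "(x + y) mod L = x mod L + y mod L" and "x mod L \<noteq> y mod L"
    by simp_all
qed

lemma label_add:
  assumes "0 < x" "0 < y" "\<not> in_copy x" "\<not> in_copy y" "\<not> in_copy (x + y)"
  shows "label (x + y) = label x + label y"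
proof -
  have x: "m < x mod L \<or> (0 < x div L \<and> x mod L \<le> m - c)"
    and y: "m < y mod L \<or> (0 < y div L \<and> y mod L \<le> m - c)"
    and xy: "m < (x + y) mod L \<or> (0 < (x + y) div L \<and> (x + y) mod L \<le> m - c)"
    using assms not_in_copy_iff by simp_all
  from L_pos show ?thesis
  proof (cases rule: add_div_mod_cases[where x = x and y = y])
    case no_carry
    with x y xy L_eq c_lower c_upper show ?thesis
      unfolding label_def by auto
  next
    case carry
    moreover have "(x + y) mod L < x mod L" "(x + y) mod L < y mod L"
      using carry mod_less_divisor[OF L_pos, of x] mod_less_divisor[OF L_pos, of y] by linarith+
    ultimately show ?thesis
      using x y xy L_eq c_lower c_upper unfolding label_def by auto
  qed
qed

lemma label_range:
  assumes "0 < x" "x \<le> s * L + m" "\<not> in_copy x"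
  shows "label x \<in> {1..s}"
proof -
  have x_eq: "x div L * L + x mod L = x"
    by (rule div_mult_mod_eq)
  have "m < x mod L \<or> (0 < x div L \<and> x mod L \<le> m - c)"
    using assms(1,3) not_in_copy_iff by simp
  then show ?thesis
  proof (elim disjE conjE)
    assume above: "m < x mod L"
    with assms(2) x_eq have "x div L * L < s * L"
      by linarith
    then have "x div L < s"
      by (rule mult_right_less_imp_less) simp
    with above show ?thesis
      unfolding label_def by simp
  next
    assume "0 < x div L" "x mod L \<le> m - c"
    moreover have "(s + 1) * L = s * L + L"
      by simp
    ultimately have "x div L * L < (s + 1) * L"
      using assms(2) x_eq L_eq by linarith
    then have "x div L < s + 1"
      by (rule mult_right_less_imp_less) simp
    with \<open>0 < x div L\<close> \<open>x mod L \<le> m - c\<close> show ?thesis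
      unfolding label_def by simp
  qed
qed

lemma partitionable_weakly_sum_free_extend:
  assumes "partitionable weakly_sum_free n m" and "partitionable sum_free k s"
  shows "partitionable weakly_sum_free (n + k) (s * L + m)"
proof -
  obtain a where a_range: "\<forall>r\<in>{1..m}. a r < n"
    and a_classes: "\<forall>i<n. weakly_sum_free {r\<in>{1..m}. a r = i}"
    using assms(1) unfolding partitionable_iff_colouring by blast
  obtain b where b_range: "\<forall>l\<in>{1..s}. b l < k"
    and b_classes: "\<forall>j<k. sum_free {l\<in>{1..s}. b l = j}"
    using assms(2) unfolding partitionable_iff_colouring by blast
  define f where "f x = (if in_copy x then a (x mod L) else n + b (label x))" for x
  have in_copy_iff_colour: "in_copy x \<longleftrightarrow> f x < n" for x
    using a_range unfolding f_def in_copy_def by auto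
  have "f x < n + k" if x: "x \<in> {1..s * L + m}" for x
  proof (cases "in_copy x")
    case True
    then have "x mod L \<in> {1..m}"
      unfolding in_copy_def by simp
    with a_range have "a (x mod L) < n"
      by blast
    with True show ?thesis
      unfolding f_def by simp
  next
    case False
    with x have "label x \<in> {1..s}"
      by (intro label_range) auto
    with b_range have "b (label x) < k"
      by blast
    with False show ?thesis
      unfolding f_def by simp
  qed
  moreover have "weakly_sum_free {x\<in>{1..s * L + m}. f x = i}" if "i < n + k" for i
    unfolding weakly_sum_free_def
  proof (intro ballI impI notI)
    fix x y
    assume "x \<in> {x\<in>{1..s * L + m}. f x = i}" "y \<in> {x\<in>{1..s * L + m}. f x = i}"
      and "x \<noteq> y" and "x + y \<in> {x\<in>{1..s * L + m}. f x = i}"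
    then have pos: "0 < x" "0 < y"
      and bounds: "x \<le> s * L + m" "y \<le> s * L + m" "x + y \<le> s * L + m"
      and colours: "f x = i" "f y = i" "f (x + y) = i"
      by auto
    show False
    proof (cases "i < n")
      case True
      with colours have copies: "in_copy x" "in_copy y" "in_copy (x + y)"
        by (simp_all add: in_copy_iff_colour)
      with colours have residues: "x mod L \<in> {r\<in>{1..m}. a r = i}"
        "y mod L \<in> {r\<in>{1..m}. a r = i}" "(x + y) mod L \<in> {r\<in>{1..m}. a r = i}"
        unfolding f_def in_copy_def by auto
      from a_classes True have "weakly_sum_free {r\<in>{1..m}. a r = i}"
        by blast
      with residues(1,2) in_copy_add(2)[OF copies \<open>x \<noteq> y\<close>]
      have "x mod L + y mod L \<notin> {r\<in>{1..m}. a r = i}"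
        unfolding weakly_sum_free_def by blast
      with residues(3) in_copy_add(1)[OF copies \<open>x \<noteq> y\<close>] show False
        by simp
    next
      case False
      with colours have non_copies: "\<not> in_copy x" "\<not> in_copy y" "\<not> in_copy (x + y)"
        by (simp_all add: in_copy_iff_colour)
      have "label x \<in> {1..s}" "label y \<in> {1..s}" "label (x + y) \<in> {1..s}"
        using label_range[OF pos(1) bounds(1) non_copies(1)]
          label_range[OF pos(2) bounds(2) non_copies(2)]
          label_range[OF _ bounds(3) non_copies(3)] pos
        by simp_all
      with colours non_copies have labels: "label x \<in> {l\<in>{1..s}. b l = i - n}"
        "label y \<in> {l\<in>{1..s}. b l = i - n}" "label (x + y) \<in> {l\<in>{1..s}. b l = i - n}"
        unfolding f_def by simp_all
      from b_classes False \<open>i < n + k\<close> have "sum_free {l\<in>{1..s}. b l = i - n}"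
        by simp
      with labels(1,2) have "label x + label y \<notin> {l\<in>{1..s}. b l = i - n}"
        unfolding sum_free_def by blast
      with labels(3) label_add[OF pos non_copies] show False
        by simp
    qed
  qed
  ultimately show ?thesis
    unfolding partitionable_iff_colouring by blast
qed

end

lemma partitionable_weakly_sum_free_add:
  assumes "partitionable weakly_sum_free n m" and "partitionable sum_free k s"
  shows "partitionable weakly_sum_free (n + k) (s * (m + (m + 1) div 2 + 1) + m)"
proof -
  interpret residue_split m "(m + 1) div 2" "m + (m + 1) div 2 + 1"
    by unfold_locales presburger+
  show ?thesis
    using partitionable_weakly_sum_free_extend[OF assms] .
qed

lemma ceiling_half: "\<lceil>real m / 2\<rceil> = int ((m + 1) div 2)"
proof -
  have "\<lceil>real m / 2\<rceil> = - (- int m div 2)"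
    using ceiling_divide_eq_div[of "int m" 2] by simp
  also have "\<dots> = int ((m + 1) div 2)"
    by presburger
  finally show ?thesis .
qed

theorem corollary3p2:
  fixes n k :: nat
  assumes "n \<ge> 1" and "k \<ge> 1"
  shows "real (weak_schur (n + k)) \<ge>
    real (schur k) * (real (weak_schur n) + real_of_int \<lceil>real (weak_schur n) / 2\<rceil> + 1)
    + real (weak_schur n)"
proof -
  have "schur k * (weak_schur n + (weak_schur n + 1) div 2 + 1) + weak_schur n \<le> weak_schur (n + k)"
    using le_weak_schur partitionable_weakly_sum_free_add partitionable_weak_schur partitionable_schur
    by blast
  then show ?thesis
    unfolding ceiling_half by (simp add: algebra_simps flip: of_nat_add of_nat_mult)
qed

end
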